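(* There is a constant $C_{\rm FQ}>0$ such that, as $n\to\infty$, the proportion of integers $m\in[q_n,q_{n+1})$ satisfying $k_{\max}(m)-k_{\min}(m)\ge C_{\rm FQ}\log(n)$ tends to $1$.
   Context: Given an increasing sequence $\{q_i\}$, a decomposition $m=q_{\ell_1}+\dots+q_{\ell_t}$ with $q_{\ell_1}>\dots>q_{\ell_t}$ is FQ-legal if $|\ell_i-\ell_j|\notin\{0,1,3,4\}$ for $i\neq j$ and $\{1,3\}\not\subset\{\ell_1,\dots,\ell_t\}$. The Fibonacci Quilt sequence $\{q_n\}$ has $q_1=1$ and each $q_i$ ($i\ge 2$) is the smallest positive integer with no FQ-legal decomposition using $q_1,\dots,q_{i-1}$ (it begins $1,2,3,4,5,7,9,12,\dots$). For a positive integer $m$, $k_{\min}(m)$ (resp. $k_{\max}(m)$) is the smallest (resp. largest) number of summands in any FQ-legal decomposition of $m$. *)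

theory Defs
  imports Complex_Main
begin

definition fq_legal :: "nat set \<Rightarrow> bool" where
  "fq_legal S \<longleftrightarrow> finite S \<and> 0 \<notin> S \<and>
     (\<forall>i\<in>S. \<forall>j\<in>S. i \<noteq> j \<longrightarrow> (if i \<le> j then j - i else i - j) \<notin> {1,3,4}) \<and>
     \<not> ({1,3} \<subseteq> S)"

text \<open>First n terms of the Fibonacci Quilt sequence (list position i-1 holds q_i).\<close>
fun fq_list :: "nat \<Rightarrow> nat list" where
  "fq_list 0 = []"
| "fq_list (Suc n) = (let l = fq_list n in
     l @ [LEAST x::nat. 0 < x \<and>
            \<not> (\<exists>S. S \<subseteq> {1..n} \<and> fq_legal S \<and> (\<Sum>i\<in>S. l ! (i - 1)) = x)])"

definition fq :: "nat \<Rightarrow> nat" where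
  "fq i = fq_list i ! (i - 1)"

definition fq_decomps :: "nat \<Rightarrow> nat set set" where
  "fq_decomps m = {S. fq_legal S \<and> (\<Sum>i\<in>S. fq i) = m}"

definition kmin :: "nat \<Rightarrow> nat" where
  "kmin m = Min (card ` fq_decomps m)"

definition kmax :: "nat \<Rightarrow> nat" where
  "kmax m = Max (card ` fq_decomps m)"

end

theory Submission
  imports Defs "HOL-Real_Asymp.Real_Asymp"
begin

text \<open>The Fibonacci Quilt numbers satisfy q(n) = q(n - 1) + q(n - 5), and every m < q(n + 1) has
  a legal decomposition in which the greedy algorithm picks the large indices, at least five apart.
  Cut the indices into blocks of 20. Whenever the greedy indices of m in the block starting at a are
  exactly a + 10 and a + 15, the identity q(a + 15) + q(a + 10) = q(a + 14) + q(a + 12) + q(a + 5)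
  trades these two summands for three while keeping the decomposition legal, so
  kmax(m) - kmin(m) is at least the number P(m) of such blocks.
  The weight, i.e. the sum of 2^-P(m) over m < q(z), obeys the recurrence of q beyond the last
  block and loses a fraction 2^-21 per block, hence is at most (1 - 2^-21)^B q(z) with
  B \<approx> n/20 blocks. By Markov's inequality the m in [q(n), q(n + 1)) with P(m) < ln n
  are a fraction at most 32 n^(ln 2) (1 - 2^-21)^((n - 29)/20) \<longrightarrow> 0, so C = 1 works.\<close>

text \<open>quilt i = q(i) for i \<ge> 1 (lemma fq_eq_quilt); quilt 0 = 1 is only a convenient seed.\<close>
fun quilt :: "nat \<Rightarrow> nat" where
  "quilt 0 = 1"
| "quilt (Suc 0) = 1"
| "quilt (Suc (Suc 0)) = 2"
| "quilt (Suc (Suc (Suc 0))) = 3"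
| "quilt (Suc (Suc (Suc (Suc 0)))) = 4"
| "quilt (Suc (Suc (Suc (Suc (Suc n))))) = quilt (Suc (Suc (Suc n))) + quilt (Suc (Suc n))"

lemma quilt_small:
  "quilt 1 = 1" "quilt 2 = 2" "quilt 3 = 3" "quilt 4 = 4" "quilt 5 = 5" "quilt 6 = 7"
  "quilt 7 = 9" "quilt 8 = 12" "quilt 9 = 16"
  by (simp_all add: numeral_eq_Suc)

lemma quilt_rec: "5 \<le> n \<Longrightarrow> quilt n = quilt (n - 2) + quilt (n - 3)"
  by (cases n rule: quilt.cases) auto

lemma quilt_pos: "0 < quilt n"
  by (induction n rule: quilt.induct) auto

lemma quilt_rec_1_5: "7 \<le> n \<Longrightarrow> quilt n = quilt (n - 1) + quilt (n - 5)"
proof (induction n rule: less_induct)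
  case (less n)
  show ?case
  proof (cases "n \<le> 9")
    case True
    then have "n = 7 \<or> n = 8 \<or> n = 9" using less.prems by auto
    then show ?thesis by (auto simp: quilt_small)
  next
    case False
    have "quilt (n - 2) = quilt (n - 3) + quilt (n - 7)"
      using less.IH[of "n - 2"] False by (simp add: numeral_eq_Suc)
    moreover have "quilt (n - 3) = quilt (n - 4) + quilt (n - 8)"
      using less.IH[of "n - 3"] False by (simp add: numeral_eq_Suc)
    moreover have "quilt (n - 1) = quilt (n - 3) + quilt (n - 4)"
      using quilt_rec[of "n - 1"] False by (simp add: numeral_eq_Suc)
    moreover have "quilt (n - 5) = quilt (n - 7) + quilt (n - 8)"
      using quilt_rec[of "n - 5"] False by (simp add: numeral_eq_Suc)
    ultimately show ?thesis using quilt_rec[of n] False by simp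
  qed
qed

lemma quilt_le_Suc: "quilt n \<le> quilt (Suc n)"
proof (cases "6 \<le> n")
  case True
  then show ?thesis using quilt_rec_1_5[of "Suc n"] by simp
next
  case False
  then have "n \<in> {0,1,2,3,4,5}" by auto
  then show ?thesis by (auto simp: quilt_small numeral_eq_Suc)
qed

lemma quilt_less_Suc: "1 \<le> n \<Longrightarrow> quilt n < quilt (Suc n)"
proof (cases "6 \<le> n")
  case True
  then show ?thesis using quilt_rec_1_5[of "Suc n"] quilt_pos[of "n - 4"] by simp
next
  case False
  assume "1 \<le> n"
  with False have "n \<in> {1,2,3,4,5}" by auto
  then show ?thesis by (auto simp: quilt_small numeral_eq_Suc)
qed

lemma quilt_mono: "m \<le> n \<Longrightarrow> quilt m \<le> quilt n"
  by (rule lift_Suc_mono_le[of quilt, OF quilt_le_Suc])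

lemma quilt_strict_mono: "1 \<le> m \<Longrightarrow> m < n \<Longrightarrow> quilt m < quilt n"
  using lift_Suc_mono_less[of "\<lambda>k. quilt (k + 1)" "m - 1" "n - 1"] quilt_less_Suc by simp

lemma quilt_Suc_le_double: "quilt (Suc n) \<le> 2 * quilt n"
proof (cases "6 \<le> n")
  case True
  then show ?thesis using quilt_rec_1_5[of "Suc n"] quilt_mono[of "n - 4" n] by simp
next
  case False
  then have "n \<in> {0,1,2,3,4,5}" by auto
  then show ?thesis by (auto simp: quilt_small numeral_eq_Suc)
qed

lemma quilt_add_le: "quilt (n + k) \<le> 2 ^ k * quilt n"
proof (induction k)
  case (Suc k)
  then show ?case using quilt_Suc_le_double[of "n + k"] by simp
qed simp

lemma le_quilt: "n \<le> quilt n"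
proof (induction n)
  case (Suc n)
  then show ?case using quilt_less_Suc[of n] by (cases "n = 0") auto
qed simp

lemma fq_legalD: "fq_legal S \<Longrightarrow> i \<in> S \<Longrightarrow> j \<in> S \<Longrightarrow> i < j \<Longrightarrow> j - i \<notin> {1, 3, 4}"
  unfolding fq_legal_def by (metis less_imp_le_nat nat_neq_iff)

lemma fq_legal_finite: "fq_legal S \<Longrightarrow> finite S"
  unfolding fq_legal_def by auto

lemma fq_legal_not_0: "fq_legal S \<Longrightarrow> 0 \<notin> S"
  unfolding fq_legal_def by auto

lemma fq_legal_not_1_3: "fq_legal S \<Longrightarrow> \<not> {1, 3} \<subseteq> S"
  unfolding fq_legal_def by auto

lemma fq_legalI:
  assumes "finite S" "0 \<notin> S" "\<not> {1, 3} \<subseteq> S"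
    and "\<And>i j. i \<in> S \<Longrightarrow> j \<in> S \<Longrightarrow> i < j \<Longrightarrow> j - i \<notin> {1, 3, 4}"
  shows "fq_legal S"
  unfolding fq_legal_def using assms
  by (smt (verit, ccfv_threshold) insertE le_eq_less_or_eq nat_neq_iff singletonD)

lemma fq_legal_subset: "fq_legal S \<Longrightarrow> T \<subseteq> S \<Longrightarrow> fq_legal T"
  unfolding fq_legal_def by (blast intro: finite_subset)

lemma fq_legal_Un:
  assumes A: "fq_legal A" and B: "fq_legal B"
    and far: "\<And>x y. x \<in> A \<Longrightarrow> y \<in> B \<Longrightarrow> x + 5 \<le> y \<or> y + 5 \<le> x"
  shows "fq_legal (A \<union> B)"
proof (rule fq_legalI)
  show "finite (A \<union> B)" using A B by (simp add: fq_legal_finite)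
  show "0 \<notin> A \<union> B" using A B by (simp add: fq_legal_not_0)
  show "\<not> {1, 3} \<subseteq> A \<union> B"
    using fq_legal_not_1_3[OF A] fq_legal_not_1_3[OF B] far[of 1 3] far[of 3 1] by auto
  fix i j assume "i \<in> A \<union> B" "j \<in> A \<union> B" "i < j"
  then show "j - i \<notin> {1, 3, 4}" using fq_legalD[OF A] fq_legalD[OF B] far by fastforce
qed

lemma fq_legal_insert_far:
  assumes "fq_legal S" "S \<subseteq> {1..k}" "k + 5 \<le> n"
  shows "fq_legal (insert n S)"
proof (rule fq_legalI)
  show "finite (insert n S)" using fq_legal_finite[OF assms(1)] by simp
  show "0 \<notin> insert n S" "\<not> {1, 3} \<subseteq> insert n S"
    using assms fq_legal_not_1_3[OF assms(1)] by auto
  fix i j assume "i \<in> insert n S" "j \<in> insert n S" "i < j"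
  then show "j - i \<notin> {1, 3, 4}" using assms fq_legalD[OF assms(1)] by fastforce
qed

lemma fq_legal_remove_top:
  assumes "fq_legal S" "k \<in> S" "S \<subseteq> {1..k}" "k - 2 \<notin> S"
  shows "S - {k} \<subseteq> {1..k - 5}"
proof
  fix x assume x: "x \<in> S - {k}"
  then have "x < k" "1 \<le> x" using assms(3) by force+
  moreover have "k - x \<notin> {1, 3, 4}" using fq_legalD[OF assms(1) _ assms(2) \<open>x < k\<close>] x by auto
  moreover have "x \<noteq> k - 2" using x assms(4) by auto
  ultimately show "x \<in> {1..k - 5}" by auto
qed

lemma fq_legal_remove_top2:
  assumes "fq_legal S" "k \<in> S" "S \<subseteq> {1..k}" "k - 2 \<in> S" "2 \<le> k"
  shows "S - {k, k - 2} \<subseteq> {1..k - 7}"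
proof
  fix x assume x: "x \<in> S - {k, k - 2}"
  then have "x < k" "1 \<le> x" using assms(3) by force+
  moreover have "k - x \<notin> {1, 3, 4}" using fq_legalD[OF assms(1) _ assms(2) \<open>x < k\<close>] x by auto
  moreover have "x < k - 2 \<Longrightarrow> (k - 2) - x \<notin> {1, 3, 4}"
    using fq_legalD[OF assms(1) _ assms(4)] x by auto
  ultimately show "x \<in> {1..k - 7}" using x by (cases "x < k - 2") auto
qed

lemma sum_remove2:
  "finite S \<Longrightarrow> k \<in> S \<Longrightarrow> j \<in> S \<Longrightarrow> j \<noteq> k \<Longrightarrow> sum f S = f k + f j + sum f (S - {k, j})"
  by (simp add: sum.remove insert_Diff_if Diff_insert2[symmetric] add.assoc)

lemma subset_atLeastAtMost_remove_top: "S \<subseteq> {a..k::nat} \<Longrightarrow> k \<notin> S \<Longrightarrow> S \<subseteq> {a..k - 1}"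
proof
  fix x assume "S \<subseteq> {a..k}" "k \<notin> S" "x \<in> S"
  then have "a \<le> x" "x \<le> k" "x \<noteq> k" by auto
  then show "x \<in> {a..k - 1}" by simp
qed

lemma quilt_remove_top_le: "1 \<le> k \<Longrightarrow> quilt k + quilt (k - 5 + 3) \<le> quilt (k + 3)"
proof (cases "7 \<le> k")
  case True
  then have "k - 5 + 3 = k - 2" by simp
  then show ?thesis using True quilt_rec[of "k + 3"] quilt_mono[of "k - 2" "k + 1"] by simp
next
  case False
  moreover assume "1 \<le> k"
  ultimately have "k \<in> {1,2,3,4,5,6}" by auto
  then show ?thesis by (auto simp: quilt_small numeral_eq_Suc)
qed

lemma quilt_remove_top2_le: "4 \<le> k \<Longrightarrow> quilt k + quilt (k - 2) + quilt (k - 7 + 3) \<le> quilt (k + 3)"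
proof (cases "8 \<le> k")
  case True
  then have "k - 7 + 3 = k - 4" by simp
  then show ?thesis
    using True quilt_rec[of "k + 3"] quilt_rec[of "k + 1"] quilt_mono[of "k - 4" "k - 1"] by simp
next
  case False
  moreover assume "4 \<le> k"
  ultimately have "k \<in> {4,5,6,7}" by auto
  then show ?thesis by (auto simp: quilt_small numeral_eq_Suc)
qed

lemma legal_sum_less_quilt: "fq_legal S \<Longrightarrow> S \<subseteq> {1..k} \<Longrightarrow> sum quilt S < quilt (k + 3)"
proof (induction k arbitrary: S rule: less_induct)
  case (less k)
  have fin: "finite S" using fq_legal_finite[OF less.prems(1)] .
  show ?case
  proof (cases "k \<in> S")
    case False
    show ?thesis
    proof (cases "k = 0")
      case True
      then show ?thesis using less.prems quilt_pos[of "k + 3"] by auto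
    next
      case False
      have "S \<subseteq> {1..k - 1}" using less.prems(2) \<open>k \<notin> S\<close> by (rule subset_atLeastAtMost_remove_top)
      then have "sum quilt S < quilt (k - 1 + 3)" using less.IH[of "k - 1"] less.prems False by simp
      also have "\<dots> \<le> quilt (k + 3)" by (intro quilt_mono) simp
      finally show ?thesis .
    qed
  next
    case True
    then have k1: "1 \<le> k" using less.prems by auto
    show ?thesis
    proof (cases "k - 2 \<in> S")
      case False
      have "sum quilt (S - {k}) < quilt (k - 5 + 3)"
        using less.IH[of "k - 5" "S - {k}"] fq_legal_remove_top[OF less.prems(1) True less.prems(2) False]
          fq_legal_subset[OF less.prems(1), of "S - {k}"] k1 by simp
      then show ?thesis using sum.remove[OF fin True, of quilt] quilt_remove_top_le[OF k1] by linarith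
    next
      case True2: True
      have "3 \<le> k" using True2 less.prems(2) by auto
      have k4: "4 \<le> k"
      proof (rule ccontr)
        assume "\<not> 4 \<le> k"
        then have "k = 3" using \<open>3 \<le> k\<close> by simp
        then show False using True True2 fq_legal_not_1_3[OF less.prems(1)] by simp
      qed
      have "sum quilt (S - {k, k - 2}) < quilt (k - 7 + 3)"
        using less.IH[of "k - 7" "S - {k, k - 2}"] k4
          fq_legal_remove_top2[OF less.prems(1) True less.prems(2) True2]
          fq_legal_subset[OF less.prems(1), of "S - {k, k - 2}"] by simp
      then show ?thesis using sum_remove2[OF fin True True2, of quilt] quilt_remove_top2_le[OF k4] k1 by simp
    qed
  qed
qed

lemma legal_sum_ge_top2:
  "fq_legal S \<Longrightarrow> k \<in> S \<Longrightarrow> k - 2 \<in> S \<Longrightarrow> 2 \<le> k \<Longrightarrow> quilt k + quilt (k - 2) \<le> sum quilt S"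
  using sum_remove2[OF fq_legal_finite, of S k "k - 2" quilt] by simp

lemma legal_sum_ne_quilt_Suc_small:
  "n \<le> 5 \<Longrightarrow> fq_legal S \<Longrightarrow> S \<subseteq> {1..n} \<Longrightarrow> sum quilt S \<noteq> quilt (Suc n)"
proof -
  assume "n \<le> 5" "fq_legal S" "S \<subseteq> {1..n}"
  moreover have "\<forall>S\<in>Pow {1,2,3,4,5::nat}. fq_legal S \<longrightarrow>
      (\<forall>n\<in>{0,1,2,3,4,5}. S \<subseteq> {1..n} \<longrightarrow> sum quilt S \<noteq> quilt (Suc n))"
    by (simp add: Pow_insert fq_legal_def quilt_small)
  moreover have "S \<in> Pow {1,2,3,4,5}" "n \<in> {0,1,2,3,4,5}" using calculation by auto
  ultimately show ?thesis by blast
qed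

lemma legal_sum_less_quilt_Suc:
  assumes legal: "fq_legal S" and sub: "S \<subseteq> {1..n}" and n6: "6 \<le> n"
    and "n \<notin> S" "\<not> {n - 1, n - 1 - 2} \<subseteq> S"
  shows "sum quilt S < quilt (Suc n)"
proof -
  have sub': "S \<subseteq> {1..n - 1}" using sub \<open>n \<notin> S\<close> by (rule subset_atLeastAtMost_remove_top)
  have rec: "quilt (Suc n) = quilt (n - 1) + quilt (n - 2)" using quilt_rec[of "Suc n"] n6 by simp
  show ?thesis
  proof (cases "n - 1 \<in> S")
    case True
    then have "n - 1 - 2 \<notin> S" using assms(5) by simp
    then have "S - {n - 1} \<subseteq> {1..n - 1 - 5}" by (rule fq_legal_remove_top[OF legal True sub'])
    then have "sum quilt (S - {n - 1}) < quilt (n - 1 - 5 + 3)"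
      by (rule legal_sum_less_quilt[OF fq_legal_subset[OF legal Diff_subset]])
    moreover have "quilt (n - 1 - 5 + 3) \<le> quilt (n - 2)" using n6 by (intro quilt_mono) simp
    ultimately show ?thesis using sum.remove[OF fq_legal_finite[OF legal] True, of quilt] rec by auto
  next
    case False
    have "S \<subseteq> {1..n - 2}"
      using subset_atLeastAtMost_remove_top[OF sub' False] by (simp add: numeral_eq_Suc)
    then have "sum quilt S < quilt (n - 2 + 3)" by (rule legal_sum_less_quilt[OF legal])
    moreover have "n - 2 + 3 = Suc n" using n6 by simp
    ultimately show ?thesis by simp
  qed
qed

lemma legal_sum_ne_quilt_Suc: "fq_legal S \<Longrightarrow> S \<subseteq> {1..n} \<Longrightarrow> sum quilt S \<noteq> quilt (Suc n)"
proof (induction n arbitrary: S rule: less_induct)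
  case (less n)
  note legal = less.prems(1) and sub = less.prems(2)
  have fin: "finite S" using fq_legal_finite[OF legal] .
  show ?case
  proof (cases "n \<le> 5")
    case True
    then show ?thesis using legal_sum_ne_quilt_Suc_small legal sub by blast
  next
    case False
    then have n6: "6 \<le> n" by simp
    have rec_1_5: "quilt (Suc n) = quilt n + quilt (n - 4)" using quilt_rec_1_5[of "Suc n"] n6 by simp
    have rec: "quilt (Suc n) = quilt (n - 1) + quilt (n - 2)" using quilt_rec[of "Suc n"] n6 by simp
    consider "n \<in> S" "n - 2 \<notin> S" | "n \<in> S" "n - 2 \<in> S"
      | "n \<notin> S" "n - 1 \<in> S" "n - 1 - 2 \<in> S" | "n \<notin> S" "\<not> {n - 1, n - 1 - 2} \<subseteq> S" by blast
    then show ?thesis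
    proof cases
      case 1
      \<comment> \<open>the rest would have to be a legal sum equal to quilt (n - 4) below index n - 5\<close>
      have "sum quilt (S - {n}) \<noteq> quilt (Suc (n - 5))"
        using less.IH[of "n - 5" "S - {n}"] fq_legal_remove_top[OF legal 1(1) sub 1(2)]
          fq_legal_subset[OF legal, of "S - {n}"] n6 by simp
      moreover have "Suc (n - 5) = n - 4" using n6 by simp
      ultimately show ?thesis using sum.remove[OF fin 1(1), of quilt] rec_1_5 by auto
    next
      case 2
      have "quilt (n - 4) < quilt (n - 2)" using n6 by (intro quilt_strict_mono) auto
      then show ?thesis using legal_sum_ge_top2[OF legal 2] rec_1_5 n6 by linarith
    next
      case 3
      \<comment> \<open>the rest would have to be a legal sum equal to quilt (n - 7) below index n - 8\<close>
      have rest: "S - {n - 1, n - 1 - 2} \<subseteq> {1..n - 1 - 7}"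
        using fq_legal_remove_top2[OF legal 3(2) subset_atLeastAtMost_remove_top[OF sub 3(1)] 3(3)] n6
        by simp
      have sum: "sum quilt S = quilt (n - 1) + quilt (n - 3) + sum quilt (S - {n - 1, n - 1 - 2})"
        using sum_remove2[OF fin 3(2) 3(3), of quilt] n6 by (simp add: numeral_eq_Suc)
      show ?thesis
      proof (cases "9 \<le> n")
        case True
        have "quilt (n - 2) = quilt (n - 3) + quilt (n - 7)"
          using quilt_rec_1_5[of "n - 2"] True by (simp add: numeral_eq_Suc)
        moreover have "Suc (n - 1 - 7) = n - 7" using True by simp
        moreover have "sum quilt (S - {n - 1, n - 1 - 2}) \<noteq> quilt (Suc (n - 1 - 7))"
          using less.IH[of "n - 1 - 7"] rest fq_legal_subset[OF legal, of "S - {n - 1, n - 1 - 2}"] n6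
          by simp
        ultimately show ?thesis using sum rec by simp
      next
        case False
        then have "S - {n - 1, n - 1 - 2} = {}" using rest by auto
        then have "sum quilt (S - {n - 1, n - 1 - 2}) = 0" by (simp only: sum.empty)
        moreover have "quilt (n - 3) < quilt (n - 2)" using n6 by (intro quilt_strict_mono) auto
        ultimately show ?thesis using sum rec by linarith
      qed
    next
      case 4
      then show ?thesis using legal_sum_less_quilt_Suc[OF legal sub n6] by simp
    qed
  qed
qed

lemma legal_decomp_small:
  "x < quilt (Suc n) \<Longrightarrow> n \<le> 5 \<Longrightarrow> \<exists>S. S \<subseteq> {1..n} \<and> fq_legal S \<and> sum quilt S = x"
proof -
  assume x: "x < quilt (Suc n)" and n: "n \<le> 5"
  have "x < 7" using x quilt_mono[of "Suc n" 6] n by (simp add: quilt_small)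
  then consider "x = 0" | "1 \<le> x" "x \<le> 5" | "x = 6" by linarith
  then show ?thesis
  proof cases
    case 1
    then show ?thesis by (intro exI[of _ "{}"]) (simp add: fq_legal_def)
  next
    case 2
    then have "x \<in> {1,2,3,4,5}" by auto
    then have qx: "quilt x = x" by (auto simp: quilt_small)
    have "x \<le> n"
    proof (rule ccontr)
      assume "\<not> x \<le> n"
      then have "quilt (Suc n) \<le> quilt x" by (intro quilt_mono) simp
      then show False using x qx by simp
    qed
    then show ?thesis using 2 qx by (intro exI[of _ "{x}"]) (auto simp: fq_legal_def)
  next
    case 3
    have "n = 5"
    proof (rule ccontr)
      assume "n \<noteq> 5"
      then have "quilt (Suc n) \<le> quilt 5" using n by (intro quilt_mono) simp
      then show False using x 3 by (simp add: quilt_small)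
    qed
    then show ?thesis using 3 by (intro exI[of _ "{2,4}"]) (auto simp: fq_legal_def quilt_small)
  qed
qed

lemma legal_decomp_below_quilt:
  "x < quilt (Suc n) \<Longrightarrow> \<exists>S. S \<subseteq> {1..n} \<and> fq_legal S \<and> sum quilt S = x"
proof (induction n arbitrary: x rule: less_induct)
  case (less n)
  show ?case
  proof (cases "n \<le> 5")
    case True
    then show ?thesis using legal_decomp_small less.prems by blast
  next
    case False
    then have n6: "6 \<le> n" by simp
    show ?thesis
    proof (cases "x < quilt n")
      case True
      then obtain S where "S \<subseteq> {1..n - 1}" "fq_legal S" "sum quilt S = x"
        using less.IH[of "n - 1" x] n6 by auto
      moreover have "{1..n - 1} \<subseteq> {1..n}" by auto
      ultimately show ?thesis by blast
    next
      case False
      \<comment> \<open>greedy step: take index n, and decompose the remainder below quilt (n - 4)\<close>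
      have "Suc (n - 5) = n - 4" using n6 by simp
      then have "x - quilt n < quilt (Suc (n - 5))"
        using quilt_rec_1_5[of "Suc n"] less.prems False n6 by simp
      then obtain S where S: "S \<subseteq> {1..n - 5}" "fq_legal S" "sum quilt S = x - quilt n"
        using less.IH[of "n - 5" "x - quilt n"] n6 by auto
      have "n \<notin> S" using S(1) n6 by auto
      show ?thesis
      proof (intro exI[of _ "insert n S"] conjI)
        have "{1..n - 5} \<subseteq> {1..n}" by auto
        then show "insert n S \<subseteq> {1..n}" using subset_trans[OF S(1)] n6 by simp
        show "fq_legal (insert n S)" by (rule fq_legal_insert_far[OF S(2) S(1)]) (use n6 in simp)
        show "sum quilt (insert n S) = x"
          using S(3) False \<open>n \<notin> S\<close> fq_legal_finite[OF S(2)] by simp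
      qed
    qed
  qed
qed

lemma fq_list_eq: "fq_list n = map quilt [1..<Suc n]"
proof (induction n)
  case (Suc n)
  define l where "l = fq_list n"
  have "\<And>i. i \<in> {1..n} \<Longrightarrow> l ! (i - 1) = quilt i"
    unfolding l_def Suc by (subst nth_map) (auto simp del: upt_Suc)
  then have "\<And>S. S \<subseteq> {1..n} \<Longrightarrow> (\<Sum>i\<in>S. l ! (i - 1)) = sum quilt S"
    by (intro sum.cong) auto
  then have "(LEAST x. 0 < x \<and> \<not> (\<exists>S. S \<subseteq> {1..n} \<and> fq_legal S \<and> (\<Sum>i\<in>S. l ! (i - 1)) = x))
      = (LEAST x. 0 < x \<and> \<not> (\<exists>S. S \<subseteq> {1..n} \<and> fq_legal S \<and> sum quilt S = x))"
    by (intro arg_cong[where f = Least] ext) metis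
  also have "\<dots> = quilt (Suc n)"
  proof (rule Least_equality)
    show "0 < quilt (Suc n) \<and> \<not> (\<exists>S. S \<subseteq> {1..n} \<and> fq_legal S \<and> sum quilt S = quilt (Suc n))"
      using quilt_pos legal_sum_ne_quilt_Suc by blast
    show "\<And>y. 0 < y \<and> \<not> (\<exists>S. S \<subseteq> {1..n} \<and> fq_legal S \<and> sum quilt S = y) \<Longrightarrow> quilt (Suc n) \<le> y"
      using legal_decomp_below_quilt by (meson not_le)
  qed
  finally show ?case using Suc by (simp add: Let_def l_def)
qed simp

lemma fq_eq_quilt: "1 \<le> i \<Longrightarrow> fq i = quilt i"
  unfolding fq_def fq_list_eq by (subst nth_map) (auto simp del: upt_Suc)

lemma fq_decomps_eq: "fq_decomps m = {S. fq_legal S \<and> sum quilt S = m}"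
proof -
  have "sum fq S = sum quilt S" if "fq_legal S" for S
  proof (rule sum.cong)
    fix i assume "i \<in> S"
    then have "1 \<le> i" using fq_legal_not_0[OF that] by (metis less_one not_le)
    then show "fq i = quilt i" by (rule fq_eq_quilt)
  qed simp
  then show ?thesis unfolding fq_decomps_def by auto
qed

lemma finite_fq_decomps: "finite (fq_decomps m)"
proof (rule finite_subset)
  show "fq_decomps m \<subseteq> Pow {..m}"
  proof
    fix S assume "S \<in> fq_decomps m"
    then have S: "fq_legal S" "sum quilt S = m" using fq_decomps_eq by auto
    have "i \<le> m" if "i \<in> S" for i
      using le_quilt[of i] member_le_sum[OF that, of quilt] fq_legal_finite[OF S(1)] S(2) by simp
    then show "S \<in> Pow {..m}" by auto
  qed
qed simp

definition gapped :: "nat set \<Rightarrow> bool" where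
  "gapped G \<longleftrightarrow> (\<forall>x\<in>G. \<forall>y\<in>G. x < y \<longrightarrow> x + 5 \<le> y)"

lemma gapped_empty: "gapped {}"
  unfolding gapped_def by simp

lemma gapped_insert: "gapped G \<Longrightarrow> (\<And>x. x \<in> G \<Longrightarrow> x + 5 \<le> y) \<Longrightarrow> gapped (insert y G)"
  unfolding gapped_def by fastforce

lemma fq_legal_gapped: "gapped G \<Longrightarrow> finite G \<Longrightarrow> 0 \<notin> G \<Longrightarrow> fq_legal G"
  unfolding gapped_def by (rule fq_legalI) fastforce+

text \<open>The greedy algorithm on the indices from z - 1 down to 10. It returns the chosen indices,
  the remainder it leaves, and the index w at which it stopped.\<close>
function greedy :: "nat \<Rightarrow> nat \<Rightarrow> nat set \<times> nat \<times> nat" where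
  "greedy m z = (if z \<le> 10 then ({}, m, z)
     else if quilt (z - 1) \<le> m
       then (case greedy (m - quilt (z - 1)) (z - 5) of (G, r, w) \<Rightarrow> (insert (z - 1) G, r, w))
     else greedy m (z - 1))"
  by pat_completeness auto
termination by (relation "measure snd") auto

declare greedy.simps[simp del]

lemma greedy_stop: "z \<le> 10 \<Longrightarrow> greedy m z = ({}, m, z)"
  by (subst greedy.simps) simp

lemma greedy_take: "10 < z \<Longrightarrow> quilt (z - 1) \<le> m \<Longrightarrow>
    greedy m z = (case greedy (m - quilt (z - 1)) (z - 5) of (G, r, w) \<Rightarrow> (insert (z - 1) G, r, w))"
  by (subst greedy.simps) simp

lemma greedy_skip: "10 < z \<Longrightarrow> m < quilt (z - 1) \<Longrightarrow> greedy m z = greedy m (z - 1)"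
  by (subst greedy.simps) simp

definition greedy_set :: "nat \<Rightarrow> nat \<Rightarrow> nat set" where
  "greedy_set m z = fst (greedy m z)"

lemma greedy_invariant:
  "greedy m z = (G, r, w) \<Longrightarrow> m < quilt z \<Longrightarrow> 6 \<le> z \<Longrightarrow>
     sum quilt G + r = m \<and> r < quilt w \<and> 6 \<le> w \<and> w \<le> 10 \<and> w \<le> z \<and> (\<forall>x\<in>G. w + 4 \<le> x \<and> x < z)
     \<and> gapped G \<and> finite G"
proof (induction m z arbitrary: G r w rule: greedy.induct)
  case (1 m z)
  show ?case
  proof (cases "z \<le> 10")
    case True
    then show ?thesis using "1.prems" by (simp add: greedy_stop gapped_empty)
  next
    case z: False
    show ?thesis
    proof (cases "quilt (z - 1) \<le> m")
      case True
      obtain G' where G': "greedy (m - quilt (z - 1)) (z - 5) = (G', r, w)" "G = insert (z - 1) G'"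
      proof -
        obtain G' r' w' where G': "greedy (m - quilt (z - 1)) (z - 5) = (G', r', w')"
          using prod_cases3 by blast
        then show ?thesis using that "1.prems"(1) greedy_take[OF _ True] z by simp
      qed
      have "m - quilt (z - 1) < quilt (z - 5)"
        using quilt_rec_1_5[of z] z True "1.prems"(2) by simp
      then have IH: "sum quilt G' + r = m - quilt (z - 1) \<and> r < quilt w \<and> 6 \<le> w \<and> w \<le> 10
          \<and> w \<le> z - 5 \<and> (\<forall>x\<in>G'. w + 4 \<le> x \<and> x < z - 5) \<and> gapped G' \<and> finite G'"
        using "1.IH"(1)[OF z True G'(1)] z by simp
      then have "z - 1 \<notin> G'" by auto
      then have "sum quilt G = quilt (z - 1) + sum quilt G'" using G'(2) IH by simp
      moreover have "gapped G" unfolding G'(2) using IH by (intro gapped_insert) auto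
      ultimately show ?thesis using G'(2) IH True z by auto
    next
      case False
      then have G: "greedy m (z - 1) = (G, r, w)" using "1.prems"(1) greedy_skip[of z m] z by simp
      have "m < quilt (z - 1)" "6 \<le> z - 1" using False z by auto
      then have "sum quilt G + r = m \<and> r < quilt w \<and> 6 \<le> w \<and> w \<le> 10 \<and> w \<le> z - 1
          \<and> (\<forall>x\<in>G. w + 4 \<le> x \<and> x < z - 1) \<and> gapped G \<and> finite G"
        using "1.IH"(2)[OF z False G] by blast
      then show ?thesis by auto
    qed
  qed
qed

lemma greedy_set_take:
  "10 < z \<Longrightarrow> quilt (z - 1) \<le> m \<Longrightarrow>
    greedy_set m z = insert (z - 1) (greedy_set (m - quilt (z - 1)) (z - 5))"
  unfolding greedy_set_def using greedy_take[of z m] by (simp split: prod.split)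

lemma greedy_set_skip: "10 < z \<Longrightarrow> m < quilt (z - 1) \<Longrightarrow> greedy_set m z = greedy_set m (z - 1)"
  unfolding greedy_set_def using greedy_skip[of z m] by simp

lemma greedy_set_subset: "greedy_set m z \<subseteq> {10..<z}"
proof (induction m z rule: greedy.induct)
  case (1 m z)
  consider "z \<le> 10" | "10 < z" "quilt (z - 1) \<le> m" | "10 < z" "m < quilt (z - 1)" by linarith
  then show ?case
  proof cases
    case 1
    then show ?thesis by (simp add: greedy_set_def greedy_stop)
  next
    case 2
    have "greedy_set (m - quilt (z - 1)) (z - 5) \<subseteq> {10..<z - 5}" using "1.IH"(1) 2 by simp
    then have "greedy_set (m - quilt (z - 1)) (z - 5) \<subseteq> {10..<z}" by (rule subset_trans) auto
    then show ?thesis unfolding greedy_set_take[OF 2] using 2 by simp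
  next
    case 3
    have "greedy_set m (z - 1) \<subseteq> {10..<z - 1}" using "1.IH"(2) 3 by simp
    then show ?thesis unfolding greedy_set_skip[OF 3] by (rule subset_trans) auto
  qed
qed

lemma greedy_set_below: "m < quilt w \<Longrightarrow> 10 \<le> w \<Longrightarrow> w \<le> z \<Longrightarrow> greedy_set m z = greedy_set m w"
proof (induction z)
  case (Suc z)
  show ?case
  proof (cases "w = Suc z")
    case False
    then have "m < quilt z" using Suc.prems quilt_mono[of w z] by simp
    then show ?thesis using greedy_set_skip[of "Suc z" m] Suc False by simp
  qed simp
qed simp

lemma greedy_set_meets:
  "quilt w \<le> m \<Longrightarrow> m < quilt z \<Longrightarrow> 10 \<le> w \<Longrightarrow> w \<le> z \<Longrightarrow>
    \<exists>x\<in>greedy_set m z. w \<le> x \<and> x < z"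
proof (induction z)
  case (Suc z)
  have "w \<noteq> Suc z" using Suc.prems(1,2) by auto
  then have wz: "w \<le> z" "10 < Suc z" using Suc.prems(3,4) by auto
  show ?case
  proof (cases "quilt z \<le> m")
    case True
    then show ?thesis using greedy_set_take[of "Suc z" m] wz by auto
  next
    case False
    then have "\<exists>x\<in>greedy_set m z. w \<le> x \<and> x < z" using Suc.IH Suc.prems(1,3) wz(1) by simp
    then show ?thesis using greedy_set_skip[of "Suc z" m] wz False by auto
  qed
qed simp

lemma greedy_set_leading:
  assumes "quilt d \<le> m" "m < quilt (Suc d)" "10 \<le> d" "d < z"
  shows "greedy_set m z = insert d (greedy_set (m - quilt d) (d - 4))"
proof -
  have "greedy_set m z = greedy_set m (Suc d)" by (rule greedy_set_below) (use assms in auto)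
  also have "\<dots> = insert d (greedy_set (m - quilt d) (d - 4))"
    using greedy_set_take[of "Suc d" m] assms by simp
  finally show ?thesis .
qed

lemma quilt_pattern_le: "quilt (a + 15) + quilt (a + 10) + quilt a \<le> quilt (a + 16)"
proof -
  have "quilt (a + 16) = quilt (a + 15) + quilt (a + 11)"
    using quilt_rec_1_5[of "a + 16"] by (simp add: add.commute)
  moreover have "quilt (a + 11) = quilt (a + 10) + quilt (a + 6)"
    using quilt_rec_1_5[of "a + 11"] by (simp add: add.commute)
  moreover have "quilt a \<le> quilt (a + 6)" by (rule quilt_mono) simp
  ultimately show ?thesis by simp
qed

lemma greedy_set_pattern:
  assumes "10 \<le> a" "a + 16 \<le> z"
    and "quilt (a + 15) + quilt (a + 10) \<le> m" "m < quilt (a + 15) + quilt (a + 10) + quilt a"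
  shows "greedy_set m z
    = insert (a + 15) (insert (a + 10) (greedy_set (m - quilt (a + 15) - quilt (a + 10)) a))"
proof -
  have "m < quilt (a + 16)" using assms(4) quilt_pattern_le[of a] by linarith
  then have "greedy_set m z = insert (a + 15) (greedy_set (m - quilt (a + 15)) (a + 11))"
    using greedy_set_leading[of "a + 15" m z] assms by (simp add: numeral_eq_Suc)
  also have "greedy_set (m - quilt (a + 15)) (a + 11)
      = insert (a + 10) (greedy_set (m - quilt (a + 15) - quilt (a + 10)) (a + 6))"
    using greedy_set_leading[of "a + 10" "m - quilt (a + 15)" "a + 11"] assms
      quilt_rec_1_5[of "a + 11"] quilt_mono[of a "a + 6"] by (simp add: numeral_eq_Suc)
  also have "greedy_set (m - quilt (a + 15) - quilt (a + 10)) (a + 6)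
      = greedy_set (m - quilt (a + 15) - quilt (a + 10)) a"
    by (rule greedy_set_below) (use assms in auto)
  finally show ?thesis .
qed

lemma greedy_set_top_index:
  assumes d: "10 \<le> d" "d < z" and m: "m < quilt z" and top: "greedy_set m z \<inter> {d..<z} = {d}"
  shows "quilt d \<le> m" "m < quilt (Suc d)"
proof -
  show "m < quilt (Suc d)"
  proof (rule ccontr)
    assume "\<not> m < quilt (Suc d)"
    then obtain x where x: "x \<in> greedy_set m z" "Suc d \<le> x" "x < z"
      using greedy_set_meets[OF _ m _ Suc_leI[OF d(2)]] d(1) by auto
    then have "x \<in> greedy_set m z \<inter> {d..<z}" by simp
    then show False using top x(2) by simp
  qed
  show "quilt d \<le> m"
  proof (rule ccontr)
    assume "\<not> quilt d \<le> m"
    then have "greedy_set m z = greedy_set m d" by (intro greedy_set_below) (use d in auto)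
    then show False using greedy_set_subset[of m d] top by auto
  qed
qed

lemma greedy_set_pattern_bounds:
  assumes a: "10 \<le> a" and z: "a + 16 \<le> z" "z \<le> a + 20" and m: "m < quilt z"
    and pattern: "greedy_set m z \<inter> {a..<a + 20} = {a + 10, a + 15}"
  shows "quilt (a + 15) + quilt (a + 10) \<le> m \<and> m < quilt (a + 15) + quilt (a + 10) + quilt a"
proof -
  have "{a + 15..<z} \<subseteq> {a..<a + 20}" using z by auto
  then have "greedy_set m z \<inter> {a + 15..<z} = {a + 10, a + 15} \<inter> {a + 15..<z}"
    unfolding pattern[symmetric] by blast
  also have "\<dots> = {a + 15}" using z by auto
  finally have "greedy_set m z \<inter> {a + 15..<z} = {a + 15}" .
  moreover have "10 \<le> a + 15" "a + 15 < z" using z by auto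
  ultimately have m15: "quilt (a + 15) \<le> m" "m < quilt (Suc (a + 15))"
    using greedy_set_top_index[OF _ _ m] by blast+
  define m1 where "m1 = m - quilt (a + 15)"
  have G1: "greedy_set m z = insert (a + 15) (greedy_set m1 (a + 11))"
    using greedy_set_leading[of "a + 15" m z] a z m15 by (simp add: m1_def numeral_eq_Suc)
  have m1_less: "m1 < quilt (a + 11)"
    using m15 quilt_rec_1_5[of "a + 16"] a by (simp add: m1_def add.commute)
  have "a + 10 \<in> greedy_set m z" using pattern by blast
  then have "greedy_set m1 (a + 11) \<inter> {a + 10..<a + 11} = {a + 10}" using G1 by auto
  then have m10: "quilt (a + 10) \<le> m1" using greedy_set_top_index(1)[OF _ _ m1_less] a by auto
  define m2 where "m2 = m1 - quilt (a + 10)"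
  have G2: "greedy_set m1 (a + 11) = insert (a + 10) (greedy_set m2 (a + 6))"
    using greedy_set_leading[of "a + 10" m1 "a + 11"] a m10 m1_less by (simp add: m2_def numeral_eq_Suc)
  \<comment> \<open>a greedy index in [a, a + 6) would break the pattern\<close>
  have m0: "m2 < quilt a"
  proof (rule ccontr)
    assume "\<not> m2 < quilt a"
    moreover have "m2 < quilt (a + 6)"
      using m10 m1_less quilt_rec_1_5[of "a + 11"] a by (simp add: m2_def add.commute)
    ultimately obtain x where x: "x \<in> greedy_set m2 (a + 6)" "a \<le> x" "x < a + 6"
      using greedy_set_meets[of a m2 "a + 6"] a by auto
    then have "x \<in> greedy_set m z \<inter> {a..<a + 20}" using G1 G2 by simp
    then show False using pattern x(3) by auto
  qed
  show ?thesis using m15 m10 m0 unfolding m1_def m2_def by linarith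
qed

definition block_start :: "nat \<Rightarrow> nat" where
  "block_start b = 10 + 20 * b"

definition block :: "nat \<Rightarrow> nat set" where
  "block b = {block_start b..<block_start b + 20}"

definition pattern :: "nat \<Rightarrow> nat set" where
  "pattern b = {block_start b + 10, block_start b + 15}"

definition pattern_value :: "nat \<Rightarrow> nat" where
  "pattern_value b = quilt (block_start b + 15) + quilt (block_start b + 10)"

definition pattern_count :: "nat \<Rightarrow> nat \<Rightarrow> nat \<Rightarrow> nat" where
  "pattern_count B m z = card {b \<in> {..<B}. greedy_set m z \<inter> block b = pattern b}"

lemma block_start_ge: "10 \<le> block_start b"
  unfolding block_start_def by simp

lemma block_below: "b < B \<Longrightarrow> x \<in> block b \<Longrightarrow> x < block_start B"
  unfolding block_def block_start_def by auto

lemma block_disjoint: "b \<noteq> b' \<Longrightarrow> block b \<inter> block b' = {}"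
  unfolding block_def block_start_def by (cases "b < b'") (auto simp: nat_neq_iff)

lemma greedy_set_block_iff:
  assumes "block_start b + 16 \<le> z" "z \<le> block_start b + 20" "m < quilt z"
  shows "greedy_set m z \<inter> block b = pattern b
    \<longleftrightarrow> pattern_value b \<le> m \<and> m < pattern_value b + quilt (block_start b)"
proof
  assume "greedy_set m z \<inter> block b = pattern b"
  then show "pattern_value b \<le> m \<and> m < pattern_value b + quilt (block_start b)"
    using greedy_set_pattern_bounds[OF block_start_ge assms] unfolding block_def pattern_def pattern_value_def
    by simp
next
  assume "pattern_value b \<le> m \<and> m < pattern_value b + quilt (block_start b)"
  then have "greedy_set m z = insert (block_start b + 15) (insert (block_start b + 10)
      (greedy_set (m - quilt (block_start b + 15) - quilt (block_start b + 10)) (block_start b)))"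
    using greedy_set_pattern[OF block_start_ge assms(1)] unfolding pattern_value_def by simp
  moreover have "greedy_set m' (block_start b) \<inter> block b = {}" for m'
    using greedy_set_subset[of m' "block_start b"] unfolding block_def by auto
  moreover have "block_start b + 15 \<in> block b" "block_start b + 10 \<in> block b"
    unfolding block_def by auto
  ultimately show "greedy_set m z \<inter> block b = pattern b" unfolding pattern_def by auto
qed

lemma pattern_count_skip: "10 < z \<Longrightarrow> m < quilt (z - 1) \<Longrightarrow> pattern_count B m z = pattern_count B m (z - 1)"
  unfolding pattern_count_def by (simp add: greedy_set_skip)

lemma pattern_count_take:
  assumes "10 < z" "block_start B < z" "quilt (z - 1) \<le> m"
  shows "pattern_count B m z = pattern_count B (m - quilt (z - 1)) (z - 5)"
proof -
  have "greedy_set m z \<inter> block b = greedy_set (m - quilt (z - 1)) (z - 5) \<inter> block b" if "b < B" for b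
    using greedy_set_take[OF assms(1,3)] block_below[OF that, of "z - 1"] assms(2) by auto
  then show ?thesis unfolding pattern_count_def by (metis (lifting) lessThan_iff)
qed

lemma pattern_count_Suc:
  assumes "block_start b + 16 \<le> z" "z \<le> block_start b + 20" "m < quilt z"
  shows "pattern_count (Suc b) m z = pattern_count b m z
    + (if pattern_value b \<le> m \<and> m < pattern_value b + quilt (block_start b) then 1 else 0)"
proof -
  have "{b' \<in> {..<Suc b}. greedy_set m z \<inter> block b' = pattern b'} =
      {b' \<in> {..<b}. greedy_set m z \<inter> block b' = pattern b'}
      \<union> (if greedy_set m z \<inter> block b = pattern b then {b} else {})"
    by (auto simp: less_Suc_eq)
  then show ?thesis unfolding pattern_count_def greedy_set_block_iff[OF assms, symmetric] by auto
qed

lemma pattern_count_shift: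
  assumes "block_start b + 16 \<le> z" "z \<le> block_start b + 20" "r < quilt (block_start b)"
  shows "pattern_count b (pattern_value b + r) z = pattern_count b r (block_start b)"
proof -
  have "pattern_value b + r < quilt z"
    using quilt_pattern_le[of "block_start b"] assms quilt_mono[of "block_start b + 16" z]
    unfolding pattern_value_def by simp
  then have G: "greedy_set (pattern_value b + r) z
      = insert (block_start b + 15) (insert (block_start b + 10) (greedy_set r (block_start b)))"
    using greedy_set_pattern[OF block_start_ge assms(1)] assms(3) unfolding pattern_value_def by simp
  have "greedy_set (pattern_value b + r) z \<inter> block b' = greedy_set r (block_start b) \<inter> block b'"
    if "b' < b" for b'
    using block_below[OF that, of "block_start b + 15"] block_below[OF that, of "block_start b + 10"]
    unfolding G by auto
  then show ?thesis unfolding pattern_count_def by (metis (lifting) lessThan_iff)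
qed

lemma sum_lessThan_add: "(\<Sum>i<m + n. f i) = (\<Sum>i<m. f i) + (\<Sum>i<n. f (m + i :: nat))"
  by (induction n) (simp_all add: add.assoc)

definition weight :: "nat \<Rightarrow> nat \<Rightarrow> real" where
  "weight B z = (\<Sum>m<quilt z. (1 / 2) ^ pattern_count B m z)"

lemma weight_0: "weight 0 z = quilt z"
  unfolding weight_def pattern_count_def by simp

lemma weight_rec: "10 < z \<Longrightarrow> block_start B < z \<Longrightarrow> weight B z = weight B (z - 1) + weight B (z - 5)"
proof -
  assume z: "10 < z" "block_start B < z"
  have "quilt z = quilt (z - 1) + quilt (z - 5)" using quilt_rec_1_5[of z] z by simp
  then have "weight B z = (\<Sum>m<quilt (z - 1). (1 / 2) ^ pattern_count B m z)
      + (\<Sum>r<quilt (z - 5). (1 / 2) ^ pattern_count B (quilt (z - 1) + r) z)"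
    unfolding weight_def by (simp add: sum_lessThan_add)
  also have "(\<Sum>m<quilt (z - 1). (1 / 2 :: real) ^ pattern_count B m z) = weight B (z - 1)"
    unfolding weight_def by (rule sum.cong) (use pattern_count_skip[OF z(1)] in auto)
  also have "(\<Sum>r<quilt (z - 5). (1 / 2 :: real) ^ pattern_count B (quilt (z - 1) + r) z) = weight B (z - 5)"
    unfolding weight_def by (rule sum.cong) (use pattern_count_take[OF z] in auto)
  finally show ?thesis .
qed

text \<open>Beyond the last block the weight grows like quilt itself, since both satisfy the
  same recurrence.\<close>
lemma weight_le_affine:
  fixes \<mu> :: real
  assumes below: "\<And>z. block_start B - 4 \<le> z \<Longrightarrow> z < block_start B \<Longrightarrow> weight B z \<le> \<mu> * quilt z"
    and start: "weight B (block_start B) \<le> \<mu> * quilt (block_start B)"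
  shows "block_start B \<le> z \<Longrightarrow>
    weight B z \<le> \<mu> * (quilt z - real (quilt (block_start B))) + weight B (block_start B)"
proof (induction z rule: less_induct)
  case (less z)
  show ?case
  proof (cases "z = block_start B")
    case False
    then have z: "block_start B < z" "10 < z" using less.prems block_start_ge[of B] by auto
    have "weight B (z - 1) \<le> \<mu> * (quilt (z - 1) - real (quilt (block_start B))) + weight B (block_start B)"
      using less.IH[of "z - 1"] z by simp
    moreover have "weight B (z - 5) \<le> \<mu> * quilt (z - 5)"
    proof (cases "block_start B \<le> z - 5")
      case True
      then show ?thesis using less.IH[of "z - 5"] z start by (simp add: algebra_simps)
    qed (use below[of "z - 5"] z in simp)
    moreover have "real (quilt z) = quilt (z - 1) + quilt (z - 5)" using quilt_rec_1_5[of z] z by simp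
    ultimately show ?thesis using weight_rec[OF z(2,1)] by (simp add: algebra_simps)
  qed simp
qed

text \<open>Adding block b halves the weight of exactly those m whose greedy set carries the
  pattern in block b, and these m form a translate of the range counted by weight b at
  block_start b.\<close>
lemma weight_Suc:
  assumes z: "block_start b + 16 \<le> z" "z \<le> block_start b + 20"
  shows "weight (Suc b) z = weight b z - weight b (block_start b) / 2"
proof -
  define V where "V = pattern_value b"
  define a where "a = block_start b"
  define h :: "nat \<Rightarrow> real" where "h m = (1 / 2) ^ pattern_count b m z" for m
  define F where "F m = (if V \<le> m \<and> m < V + quilt a then h m / 2 else 0)" for m
  have le: "V + quilt a \<le> quilt z"
    using quilt_pattern_le[of a] quilt_mono[of "a + 16" z] z unfolding V_def a_def pattern_value_def by simp
  have "weight (Suc b) z = (\<Sum>m<quilt z. h m - F m)"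
    unfolding weight_def by (rule sum.cong) (auto simp: pattern_count_Suc[OF z] h_def F_def V_def a_def)
  also have "\<dots> = weight b z - (\<Sum>m<quilt z. F m)"
    unfolding weight_def h_def by (simp add: sum_subtractf)
  also have "(\<Sum>m<quilt z. F m) = (\<Sum>r<quilt a. F (V + r))"
  proof -
    have "(\<Sum>m<quilt z. F m) = (\<Sum>m<V + quilt a + (quilt z - (V + quilt a)). F m)" using le by simp
    also have "\<dots> = (\<Sum>m<V. F m) + (\<Sum>r<quilt a. F (V + r))
        + (\<Sum>r<quilt z - (V + quilt a). F (V + quilt a + r))"
      by (simp only: sum_lessThan_add)
    finally show ?thesis unfolding F_def by simp
  qed
  also have "\<dots> = (\<Sum>r<quilt a. (1 / 2) ^ pattern_count b r a / 2)"
    by (rule sum.cong) (simp_all add: F_def h_def V_def a_def pattern_count_shift[OF z])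
  also have "\<dots> = weight b a / 2"
    unfolding weight_def by (simp add: sum_divide_distrib)
  finally show ?thesis unfolding a_def .
qed

text \<open>The ratio 1 - 2^-21 comes from quilt (a + 20) \<le> 2^20 quilt a: across one block the
  halving of weight b at a costs at least a 2^-21 fraction of the total.\<close>
definition decay :: real where
  "decay = 1 - 1 / 2 ^ 21"

lemma decay_ge_0: "0 \<le> decay"
  unfolding decay_def by simp

lemma weight_block_bound:
  "block_start b - 4 \<le> z \<Longrightarrow> z \<le> block_start b \<Longrightarrow> weight b z \<le> decay ^ b * quilt z"
proof (induction b arbitrary: z)
  case 0
  then show ?case using weight_0 by simp
next
  case (Suc b)
  define a where "a = block_start b"
  define \<mu> where "\<mu> = decay ^ b"
  have z: "a + 16 \<le> z" "z \<le> a + 20" using Suc.prems unfolding a_def block_start_def by auto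
  have start: "weight b a \<le> \<mu> * quilt a" using Suc.IH[of a] unfolding \<mu>_def a_def by simp
  have "weight b z \<le> \<mu> * (quilt z - real (quilt a)) + weight b a"
    using weight_le_affine[of b \<mu> z] Suc.IH start z unfolding \<mu>_def a_def by simp
  then have "weight (Suc b) z \<le> \<mu> * (quilt z - real (quilt a)) + \<mu> * quilt a / 2"
    using weight_Suc[of b z] z start unfolding a_def by simp
  also have "\<dots> \<le> decay ^ Suc b * quilt z"
  proof -
    have "quilt z \<le> 2 ^ 20 * quilt a"
      using quilt_mono[OF z(2)] quilt_add_le[of a 20] by simp
    then have "\<mu> * quilt z / 2 ^ 21 \<le> \<mu> * quilt a / 2"
      using mult_left_mono[of "real (quilt z)" "2 ^ 20 * real (quilt a)" \<mu>] decay_ge_0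
      unfolding \<mu>_def by (simp add: field_simps)
    then show ?thesis unfolding decay_def \<mu>_def by (simp add: algebra_simps)
  qed
  finally show ?case .
qed

lemma weight_bound: "block_start B \<le> z \<Longrightarrow> weight B z \<le> decay ^ B * quilt z"
proof -
  assume z: "block_start B \<le> z"
  have start: "weight B (block_start B) \<le> decay ^ B * quilt (block_start B)"
    by (rule weight_block_bound) simp_all
  have "weight B z \<le> decay ^ B * (quilt z - real (quilt (block_start B))) + weight B (block_start B)"
    by (rule weight_le_affine[OF _ start z]) (simp add: weight_block_bound)
  then show ?thesis using start by (simp add: algebra_simps)
qed

definition gadget :: "nat \<Rightarrow> nat set" where
  "gadget b = {block_start b + 5, block_start b + 12, block_start b + 14}"

lemma quilt_gadget_eq: "quilt (a + 15) + quilt (a + 10) = quilt (a + 14) + quilt (a + 12) + quilt (a + 5)"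
proof -
  have "quilt (a + 15) = quilt (a + 14) + quilt (a + 10)"
    using quilt_rec_1_5[of "a + 15"] by (simp add: add.commute)
  moreover have "quilt (a + 12) = quilt (a + 10) + quilt (a + 9)"
    using quilt_rec[of "a + 12"] by (simp add: add.commute)
  moreover have "quilt (a + 10) = quilt (a + 9) + quilt (a + 5)"
    using quilt_rec_1_5[of "a + 10"] by (simp add: add.commute)
  ultimately show ?thesis by simp
qed

lemma fq_legal_gadget: "fq_legal (gadget b)"
  unfolding gadget_def by (rule fq_legalI) auto

lemma sum_gadget: "sum quilt (gadget b) = sum quilt (pattern b)"
  unfolding gadget_def pattern_def using quilt_gadget_eq[of "block_start b"] by simp

lemma gadget_subset_block: "gadget b \<subseteq> block b"
  unfolding gadget_def block_def by auto

lemma pattern_subset_block: "pattern b \<subseteq> block b"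
  unfolding pattern_def block_def by auto

lemma gadget_swap:
  assumes D: "fq_legal D" and P: "D \<inter> block b = pattern b"
  defines "D' \<equiv> (D - pattern b) \<union> gadget b"
  shows "fq_legal D'" "sum quilt D' = sum quilt D" "card D' = Suc (card D)"
    and "\<And>b'. b' \<noteq> b \<Longrightarrow> D' \<inter> block b' = D \<inter> block b'"
proof -
  have fin: "finite D" using fq_legal_finite[OF D] .
  have outside: "x < block_start b \<or> block_start b + 20 \<le> x" if "x \<in> D - pattern b" for x
  proof -
    have "x \<notin> block b" using that P by blast
    then show ?thesis unfolding block_def by auto
  qed
  have "gadget b \<inter> pattern b = {}" unfolding gadget_def pattern_def by auto
  then have disj: "(D - pattern b) \<inter> gadget b = {}" using P gadget_subset_block[of b] by blast
  have pat: "pattern b \<subseteq> D" using P by auto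
  show "fq_legal D'"
    unfolding D'_def
  proof (rule fq_legal_Un[OF fq_legal_subset[OF D] fq_legal_gadget])
    fix x y assume "x \<in> D - pattern b" "y \<in> gadget b"
    then show "x + 5 \<le> y \<or> y + 5 \<le> x" using outside[of x] unfolding gadget_def by auto
  qed auto
  have "sum quilt D' = sum quilt (D - pattern b) + sum quilt (gadget b)"
    unfolding D'_def using fin disj by (intro sum.union_disjoint) (auto simp: gadget_def)
  also have "\<dots> = sum quilt (D - pattern b) + sum quilt (pattern b)" by (simp add: sum_gadget)
  also have "\<dots> = sum quilt D" using fin pat by (metis add.commute sum.subset_diff)
  finally show "sum quilt D' = sum quilt D" .
  have "card (gadget b) = 3" unfolding gadget_def by simp
  then have "card D' = card (D - pattern b) + 3"
    unfolding D'_def using fin disj by (simp add: card_Un_disjoint gadget_def)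
  moreover have "card (D - pattern b) + 2 = card D"
    using card_Diff_subset[OF _ pat] card_mono[OF fin pat] by (simp add: pattern_def)
  ultimately show "card D' = Suc (card D)" by simp
  show "D' \<inter> block b' = D \<inter> block b'" if "b' \<noteq> b" for b'
    using block_disjoint[OF that[symmetric]] gadget_subset_block[of b] pattern_subset_block[of b]
    unfolding D'_def by blast
qed

lemma gadget_swaps:
  assumes "finite M" "fq_legal D" "\<And>b. b \<in> M \<Longrightarrow> D \<inter> block b = pattern b"
  shows "\<exists>D'. fq_legal D' \<and> sum quilt D' = sum quilt D \<and> card D' = card D + card M"
  using assms
proof (induction M arbitrary: D rule: finite_induct)
  case (insert b M)
  define D1 where "D1 = (D - pattern b) \<union> gadget b"
  have P: "D \<inter> block b = pattern b" using insert.prems by simp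
  note swap = gadget_swap[OF insert.prems(1) P, folded D1_def]
  have "D1 \<inter> block b' = pattern b'" if "b' \<in> M" for b'
    using swap(4)[of b'] insert.prems(2)[of b'] insert.hyps(2) that by auto
  then obtain D' where "fq_legal D'" "sum quilt D' = sum quilt D1" "card D' = card D1 + card M"
    using insert.IH[OF swap(1)] by blast
  then show ?case using swap(2,3) insert.hyps by (intro exI[of _ D']) simp
qed auto

text \<open>Completing the greedy indices by a decomposition of the remainder, which only uses
  indices at least five below them.\<close>
lemma legal_decomp_extending_greedy:
  assumes "10 \<le> z" "m < quilt z"
  obtains D where "fq_legal D" "sum quilt D = m" "\<And>b. D \<inter> block b = greedy_set m z \<inter> block b"
proof -
  obtain G r w where grd: "greedy m z = (G, r, w)" using prod_cases3 by blast
  have inv: "sum quilt G + r = m" "r < quilt (Suc (w - 1))" "6 \<le> w" "w \<le> 10"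
      "\<And>x. x \<in> G \<Longrightarrow> w + 4 \<le> x \<and> x < z" "gapped G" "finite G"
    using greedy_invariant[OF grd assms(2)] assms(1) by auto
  obtain L where L: "L \<subseteq> {1..w - 1}" "fq_legal L" "sum quilt L = r"
    using legal_decomp_below_quilt[OF inv(2)] by blast
  have far: "x + 5 \<le> y" if "x \<in> L" "y \<in> G" for x y
    using subsetD[OF L(1) that(1)] inv(3) inv(5)[OF that(2)] by auto
  show ?thesis
  proof (rule that[of "G \<union> L"])
    have "0 \<notin> G" using inv(5) by fastforce
    then have "fq_legal G" using inv(6,7) by (intro fq_legal_gapped)
    then show "fq_legal (G \<union> L)" using far by (intro fq_legal_Un[OF _ L(2)]) auto
    have "G \<inter> L = {}" using far by fastforce
    then show "sum quilt (G \<union> L) = m"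
      using inv(1,7) L(2,3) by (simp add: sum.union_disjoint fq_legal_finite)
    show "(G \<union> L) \<inter> block b = greedy_set m z \<inter> block b" for b
      using L(1) inv(4) block_start_ge[of b] grd unfolding block_def greedy_set_def by fastforce
  qed
qed

lemma pattern_count_le_spread:
  assumes "10 \<le> z" "m < quilt z"
  shows "real (pattern_count B m z) \<le> real (kmax m) - real (kmin m)"
proof -
  obtain D where D: "fq_legal D" "sum quilt D = m" "\<And>b. D \<inter> block b = greedy_set m z \<inter> block b"
    by (rule legal_decomp_extending_greedy[OF assms]) blast
  define M where "M = {b \<in> {..<B}. greedy_set m z \<inter> block b = pattern b}"
  obtain D' where D': "fq_legal D'" "sum quilt D' = m" "card D' = card D + card M"
    using gadget_swaps[of M D] D unfolding M_def by auto
  have fin: "finite (card ` fq_decomps m)" using finite_fq_decomps by simp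
  have "D \<in> fq_decomps m" "D' \<in> fq_decomps m" using D D' fq_decomps_eq by auto
  then have "card D' \<le> kmax m" "kmin m \<le> card D"
    unfolding kmax_def kmin_def using fin by (auto intro: Max_ge Min_le)
  then show ?thesis using D'(3) unfolding pattern_count_def M_def by simp
qed

lemma card_le_powr_sum:
  fixes f :: "'a \<Rightarrow> nat" and t :: real
  assumes "finite A"
  shows "real (card {x \<in> A. real (f x) \<le> t}) \<le> 2 powr t * (\<Sum>x\<in>A. (1 / 2) ^ f x)"
proof -
  have "real (card {x \<in> A. real (f x) \<le> t}) = (\<Sum>x\<in>{x \<in> A. real (f x) \<le> t}. 1)" by simp
  also have "\<dots> \<le> (\<Sum>x\<in>{x \<in> A. real (f x) \<le> t}. 2 powr t * (1 / 2) ^ f x)"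
  proof (rule sum_mono)
    fix x assume "x \<in> {x \<in> A. real (f x) \<le> t}"
    then have "2 ^ f x \<le> (2 :: real) powr t" by (simp add: powr_realpow[symmetric])
    then show "1 \<le> 2 powr t * (1 / 2) ^ f x" by (simp add: field_simps)
  qed
  also have "\<dots> \<le> (\<Sum>x\<in>A. 2 powr t * (1 / 2) ^ f x)" using assms by (intro sum_mono2) auto
  finally show ?thesis by (simp add: sum_distrib_left)
qed

lemma small_spread_card_le:
  assumes n: "30 \<le> n"
  shows "real (card {m \<in> {quilt n..<quilt (Suc n)}. real (kmax m) - real (kmin m) < ln n})
    \<le> 32 * decay powr ((real n - 29) / 20) * 2 powr ln n * (quilt (Suc n) - quilt n)"
proof -
  define B where "B = (n - 9) div 20"
  have "block_start B \<le> Suc n" using n unfolding block_start_def B_def by simp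
  have "{m \<in> {quilt n..<quilt (Suc n)}. real (kmax m) - real (kmin m) < ln n}
      \<subseteq> {m \<in> {..<quilt (Suc n)}. real (pattern_count B m (Suc n)) \<le> ln n}"
    using pattern_count_le_spread[of "Suc n" _ B] n by fastforce
  then have "real (card {m \<in> {quilt n..<quilt (Suc n)}. real (kmax m) - real (kmin m) < ln n})
      \<le> real (card {m \<in> {..<quilt (Suc n)}. real (pattern_count B m (Suc n)) \<le> ln n})"
    by (intro of_nat_mono card_mono) auto
  also have "\<dots> \<le> 2 powr ln n * weight B (Suc n)"
    unfolding weight_def by (rule card_le_powr_sum) simp
  also have "\<dots> \<le> 2 powr ln n * (decay ^ B * quilt (Suc n))"
    using weight_bound[OF \<open>block_start B \<le> Suc n\<close>] by (intro mult_left_mono) auto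
  also have "\<dots> \<le> 2 powr ln n * (decay powr ((real n - 29) / 20) * (32 * (quilt (Suc n) - quilt n)))"
  proof (intro mult_left_mono mult_mono)
    have "decay ^ B = decay powr B" using decay_ge_0 by (simp add: powr_realpow decay_def)
    moreover have "(real n - 29) / 20 \<le> B"
    proof -
      have "n - 9 \<le> 20 * B + 19" unfolding B_def by simp
      then have "real n - 28 \<le> 20 * real B" using n by linarith
      then show ?thesis by simp
    qed
    ultimately show "decay ^ B \<le> decay powr ((real n - 29) / 20)"
      by (simp add: powr_mono' decay_def)
    have "quilt (Suc n) = quilt (n - 4 + 5)" using n by simp
    also have "\<dots> \<le> 2 ^ 5 * quilt (n - 4)" by (rule quilt_add_le)
    also have "quilt (n - 4) = quilt (Suc n) - quilt n" using quilt_rec_1_5[of "Suc n"] n by simp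
    finally show "real (quilt (Suc n)) \<le> 32 * (quilt (Suc n) - quilt n)" by simp
  qed (auto simp: decay_def)
  finally show ?thesis by (simp add: mult_ac)
qed

lemma large_spread_fraction_bounds:
  assumes n: "30 \<le> n"
  defines "share \<equiv> real (card {m \<in> {fq n..<fq (Suc n)}. ln (real n) \<le> real (kmax m) - real (kmin m)})
    / real (fq (Suc n) - fq n)"
  shows "1 - 32 * decay powr ((real n - 29) / 20) * 2 powr ln (real n) \<le> share" "share \<le> 1"
proof -
  define A where "A = {quilt n..<quilt (Suc n)}"
  define T where "T = real (quilt (Suc n) - quilt n)"
  define good where "good = real (card {m \<in> A. ln (real n) \<le> real (kmax m) - real (kmin m)})"
  define bad where "bad = real (card {m \<in> A. real (kmax m) - real (kmin m) < ln (real n)})"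
  have T: "0 < T" unfolding T_def using quilt_less_Suc[of n] n by simp
  have "{m \<in> A. ln (real n) \<le> real (kmax m) - real (kmin m)}
      \<union> {m \<in> A. real (kmax m) - real (kmin m) < ln (real n)} = A"
    "{m \<in> A. ln (real n) \<le> real (kmax m) - real (kmin m)}
      \<inter> {m \<in> A. real (kmax m) - real (kmin m) < ln (real n)} = {}"
    by auto
  then have "good + bad = T"
    unfolding good_def bad_def T_def A_def by (metis (no_types, lifting) card_Un_disjoint
        card_atLeastLessThan finite_Un finite_atLeastLessThan of_nat_add)
  moreover have "share = good / T"
    unfolding share_def good_def A_def T_def using n by (simp add: fq_eq_quilt)
  ultimately have "share = 1 - bad / T" using T by (simp add: field_simps)
  moreover have "bad / T \<le> 32 * decay powr ((real n - 29) / 20) * 2 powr ln (real n)"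
    using small_spread_card_le[OF n] T unfolding bad_def A_def T_def by (simp add: divide_le_eq mult_ac)
  moreover have "0 \<le> bad / T" unfolding bad_def using T by simp
  ultimately show "1 - 32 * decay powr ((real n - 29) / 20) * 2 powr ln (real n) \<le> share" "share \<le> 1"
    by linarith+
qed

theorem theorem1p19:
  shows "\<exists>C::real. C > 0 \<and>
    ((\<lambda>n. real (card {m \<in> {fq n..<fq (Suc n)}.
              real (kmax m) - real (kmin m) \<ge> C * ln (real n)})
           / real (fq (Suc n) - fq n)) \<longlongrightarrow> 1) sequentially"
proof (intro exI[of _ 1] conjI)
  let ?share = "\<lambda>n. real (card {m \<in> {fq n..<fq (Suc n)}. real (kmax m) - real (kmin m) \<ge> 1 * ln (real n)})
    / real (fq (Suc n) - fq n)"
  let ?lower = "\<lambda>n. 1 - 32 * decay powr ((real n - 29) / 20) * 2 powr ln (real n)"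
  have "(?lower \<longlongrightarrow> 1) sequentially"
    unfolding decay_def by real_asymp
  moreover have "\<forall>\<^sub>F n in sequentially. ?lower n \<le> ?share n \<and> ?share n \<le> 1"
    using eventually_ge_at_top[of 30]
  proof (rule eventually_mono)
    fix n :: nat
    assume "30 \<le> n"
    then show "?lower n \<le> ?share n \<and> ?share n \<le> 1" using large_spread_fraction_bounds[of n] by simp
  qed
  ultimately show "(?share \<longlongrightarrow> 1) sequentially"
    by (auto intro: tendsto_sandwich[OF _ _ _ tendsto_const] elim: eventually_mono)
qed simp

end
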